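(* Let $(\mathcal C,\otimes,\mathbb I)$ be a monoidal category with pushouts and $(H,\Delta,\varepsilon)$ a coalgebra in $\mathcal C$. The induction construction defines a functor $\mathsf{Ind}:\mathsf{Cov}^H\to\mathsf{PCom}^H$: on objects, $\mathsf{Ind}(Y,X,p)$ is the partial comodule induced from $Y$ to $X$ via $p$; on morphisms, for $(F,f):(Y,X,p)\to(Y',X',p')$ in $\mathsf{Cov}^H$ there is a unique morphism $f\bullet H:X\bullet H\to X'\bullet H$ with $(f\bullet H)\circ\rho_X=\rho_{X'}\circ f$ and $(f\bullet H)\circ\pi_X=\pi_{X'}\circ(f\otimes H)$, and $\mathsf{Ind}(F,f)=(f,f\bullet H)$ is a morphism of geometric partial comodules.
   Context: $\mathcal C$ is treated as strict monoidal; the identity of an object $X$ is also written $X$. $\mathsf{Com}^H$ is the category of right $H$-comodules $(Y,\delta)$. A partial comodule datum is $(X,X\bullet H,\pi_X,\rho_X)$ with $\rho_X:X\to X\bullet H$ and $\pi_X:X\otimes H\to X\bullet H$ an epimorphism. For such a datum let: $(X\bullet H)\bullet H$ be the pushout of $\pi_X$ and $\rho_X\otimes H$, with coprojections $\rho_X\bullet H$ and $\pi_{X\bullet H}$; $X\bullet(H\otimes H)$ the pushout of $\pi_X$ and $X\otimes\Delta$, with coprojections $X\bullet\Delta$ and $\pi_{X,\Delta}$; $X\bullet(H\bullet H)$ the pushout of $\pi_{X,\Delta}$ and $\pi_X\otimes H$, with coprojections $\pi'_X$ and $\pi'_{X,\Delta}$. A geometric partial $H$-comodule is a datum such that (GP1)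 there is $X\bullet\varepsilon:X\bullet H\to X$ with $(X\bullet\varepsilon)\circ\rho_X=\mathrm{id}_X$ and $(X\bullet\varepsilon)\circ\pi_X=X\otimes\varepsilon$; (GP2) there is an isomorphism $\theta:X\bullet(H\bullet H)\to(X\bullet H)\bullet H$ with $\theta\circ\pi'_{X,\Delta}=\pi_{X\bullet H}$ and $(\rho_X\bullet H)\circ\rho_X=\theta\circ\pi'_X\circ(X\bullet\Delta)\circ\rho_X$. Morphisms $X\to X'$ are pairs $(f,f\bullet H)$ with $\rho_{X'}\circ f=(f\bullet H)\circ\rho_X$ and $\pi_{X'}\circ(f\otimes H)=(f\bullet H)\circ\pi_X$; category $\mathsf{PCom}^H$. Induction: given $(Y,\delta)\in\mathsf{Com}^H$ and an epimorphism $p:Y\to X$ in $\mathcal C$, let $X\bullet H$ with coprojections $\rho_X:X\to X\bullet H$ and $\pi_X:X\otimes H\to X\bullet H$ be the pushout of $p$ and $(p\otimes H)\circ\delta$; it is known that $(X,X\bullet H,\pi_X,\rho_X)$ is a geometric partial comodule (the induced one). $\mathsf{Cov}^H$ has objects $(Y,X,p)$ with $Y\in\mathsf{Com}^H$, $X\in\mathcal C$, $p:Y\to X$ an epimorphism in $\mathcal C$; morphisms $(F,f):(Y,X,p)\to(Y',X',p')$ consist of a comodule morphism $F:Y\to Y'$ and a morphism $f:X\to X'$ in $\mathcal C$ with $p'\circ F=f\circ p$. *)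

theory Defs
  imports Main
begin

text \<open>A category is given by a set of objects, a set of arrows, domain, codomain,
identities and composition (cmp g f = g after f).\<close>

record ('o,'a) mcat =
  Obj :: "'o set"
  Arr :: "'a set"
  cdom :: "'a \<Rightarrow> 'o"
  ccod :: "'a \<Rightarrow> 'o"
  idt :: "'o \<Rightarrow> 'a"
  cmp :: "'a \<Rightarrow> 'a \<Rightarrow> 'a"
  tob :: "'o \<Rightarrow> 'o \<Rightarrow> 'o"
  tar :: "'a \<Rightarrow> 'a \<Rightarrow> 'a"
  unt :: "'o"

definition hom :: "('o,'a) mcat \<Rightarrow> 'o \<Rightarrow> 'o \<Rightarrow> 'a set" where
  "hom C a b = {f \<in> Arr C. cdom C f = a \<and> ccod C f = b}"

definition category :: "('o,'a) mcat \<Rightarrow> bool" where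
  "category C \<longleftrightarrow>
     (\<forall>f\<in>Arr C. cdom C f \<in> Obj C \<and> ccod C f \<in> Obj C) \<and>
     (\<forall>a\<in>Obj C. idt C a \<in> hom C a a) \<and>
     (\<forall>f\<in>Arr C. \<forall>g\<in>Arr C. ccod C f = cdom C g \<longrightarrow>
         cmp C g f \<in> hom C (cdom C f) (ccod C g)) \<and>
     (\<forall>f\<in>Arr C. cmp C f (idt C (cdom C f)) = f \<and> cmp C (idt C (ccod C f)) f = f) \<and>
     (\<forall>f\<in>Arr C. \<forall>g\<in>Arr C. \<forall>h\<in>Arr C. ccod C f = cdom C g \<longrightarrow> ccod C g = cdom C h \<longrightarrow>
         cmp C h (cmp C g f) = cmp C (cmp C h g) f)"

definition strict_monoidal :: "('o,'a) mcat \<Rightarrow> bool" where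
  "strict_monoidal C \<longleftrightarrow> category C \<and> unt C \<in> Obj C \<and>
     (\<forall>a\<in>Obj C. \<forall>b\<in>Obj C. tob C a b \<in> Obj C) \<and>
     (\<forall>f\<in>Arr C. \<forall>g\<in>Arr C.
         tar C f g \<in> hom C (tob C (cdom C f) (cdom C g)) (tob C (ccod C f) (ccod C g))) \<and>
     (\<forall>a\<in>Obj C. \<forall>b\<in>Obj C. tar C (idt C a) (idt C b) = idt C (tob C a b)) \<and>
     (\<forall>f\<in>Arr C. \<forall>g\<in>Arr C. \<forall>f'\<in>Arr C. \<forall>g'\<in>Arr C.
         ccod C f = cdom C g \<longrightarrow> ccod C f' = cdom C g' \<longrightarrow>
         tar C (cmp C g f) (cmp C g' f') = cmp C (tar C g g') (tar C f f')) \<and>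
     (\<forall>a\<in>Obj C. \<forall>b\<in>Obj C. \<forall>c\<in>Obj C. tob C (tob C a b) c = tob C a (tob C b c)) \<and>
     (\<forall>f\<in>Arr C. \<forall>g\<in>Arr C. \<forall>h\<in>Arr C. tar C (tar C f g) h = tar C f (tar C g h)) \<and>
     (\<forall>a\<in>Obj C. tob C (unt C) a = a \<and> tob C a (unt C) = a) \<and>
     (\<forall>f\<in>Arr C. tar C (idt C (unt C)) f = f \<and> tar C f (idt C (unt C)) = f)"

definition epi :: "('o,'a) mcat \<Rightarrow> 'a \<Rightarrow> bool" where
  "epi C e \<longleftrightarrow> e \<in> Arr C \<and>
     (\<forall>g\<in>Arr C. \<forall>h\<in>Arr C. cdom C g = ccod C e \<longrightarrow> cdom C h = ccod C e \<longrightarrow>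
        ccod C g = ccod C h \<longrightarrow> cmp C g e = cmp C h e \<longrightarrow> g = h)"

definition iso :: "('o,'a) mcat \<Rightarrow> 'a \<Rightarrow> bool" where
  "iso C f \<longleftrightarrow> f \<in> Arr C \<and>
     (\<exists>g\<in>hom C (ccod C f) (cdom C f).
        cmp C g f = idt C (cdom C f) \<and> cmp C f g = idt C (ccod C f))"

definition is_pushout :: "('o,'a) mcat \<Rightarrow> 'a \<Rightarrow> 'a \<Rightarrow> 'o \<Rightarrow> 'a \<Rightarrow> 'a \<Rightarrow> bool" where
  "is_pushout C f g P i j \<longleftrightarrow>
     f \<in> Arr C \<and> g \<in> Arr C \<and> cdom C f = cdom C g \<and>
     i \<in> hom C (ccod C f) P \<and> j \<in> hom C (ccod C g) P \<and>
     cmp C i f = cmp C j g \<and>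
     (\<forall>Q u v. u \<in> hom C (ccod C f) Q \<longrightarrow> v \<in> hom C (ccod C g) Q \<longrightarrow>
        cmp C u f = cmp C v g \<longrightarrow>
        (\<exists>!w. w \<in> hom C P Q \<and> cmp C w i = u \<and> cmp C w j = v))"

definition has_pushouts :: "('o,'a) mcat \<Rightarrow> bool" where
  "has_pushouts C \<longleftrightarrow>
     (\<forall>f\<in>Arr C. \<forall>g\<in>Arr C. cdom C f = cdom C g \<longrightarrow> (\<exists>P i j. is_pushout C f g P i j))"

definition coalgebra :: "('o,'a) mcat \<Rightarrow> 'o \<Rightarrow> 'a \<Rightarrow> 'a \<Rightarrow> bool" where
  "coalgebra C H D e \<longleftrightarrow> H \<in> Obj C \<and>
     D \<in> hom C H (tob C H H) \<and> e \<in> hom C H (unt C) \<and>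
     cmp C (tar C D (idt C H)) D = cmp C (tar C (idt C H) D) D \<and>
     cmp C (tar C e (idt C H)) D = idt C H \<and>
     cmp C (tar C (idt C H) e) D = idt C H"

definition comodule :: "('o,'a) mcat \<Rightarrow> 'o \<Rightarrow> 'a \<Rightarrow> 'a \<Rightarrow> 'o \<Rightarrow> 'a \<Rightarrow> bool" where
  "comodule C H D e Y dl \<longleftrightarrow> Y \<in> Obj C \<and> dl \<in> hom C Y (tob C Y H) \<and>
     cmp C (tar C dl (idt C H)) dl = cmp C (tar C (idt C Y) D) dl \<and>
     cmp C (tar C (idt C Y) e) dl = idt C Y"

definition comodule_mor :: "('o,'a) mcat \<Rightarrow> 'o \<Rightarrow> 'o \<Rightarrow> 'a \<Rightarrow> 'o \<Rightarrow> 'a \<Rightarrow> 'a \<Rightarrow> bool" where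
  "comodule_mor C H Y dl Y' dl' F \<longleftrightarrow> F \<in> hom C Y Y' \<and>
     cmp C dl' F = cmp C (tar C F (idt C H)) dl"

definition pcom_datum :: "('o,'a) mcat \<Rightarrow> 'o \<Rightarrow> 'o \<Rightarrow> 'o \<Rightarrow> 'a \<Rightarrow> 'a \<Rightarrow> bool" where
  "pcom_datum C H X XH pi rho \<longleftrightarrow> X \<in> Obj C \<and> XH \<in> Obj C \<and>
     rho \<in> hom C X XH \<and> pi \<in> hom C (tob C X H) XH \<and> epi C pi"

text \<open>Geometric partial comodule, conditions (GP1) and (GP2). The pushouts
(X\<bullet>H)\<bullet>H, X\<bullet>(H\<otimes>H), X\<bullet>(H\<bullet>H) are given as some choice of pushout
(they exist since C has pushouts; GP2 does not depend on the choice).\<close>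

definition geom_pcom :: "('o,'a) mcat \<Rightarrow> 'o \<Rightarrow> 'a \<Rightarrow> 'a \<Rightarrow> 'o \<Rightarrow> 'o \<Rightarrow> 'a \<Rightarrow> 'a \<Rightarrow> bool" where
  "geom_pcom C H D e X XH pi rho \<longleftrightarrow> pcom_datum C H X XH pi rho \<and>
     (\<exists>Xe \<in> hom C XH X. cmp C Xe rho = idt C X \<and> cmp C Xe pi = tar C (idt C X) e) \<and>
     (\<exists>XHH rhoH piXH XHxH XD piXD XHbH pi' pi'XD theta.
        is_pushout C pi (tar C rho (idt C H)) XHH rhoH piXH \<and>
        is_pushout C pi (tar C (idt C X) D) XHxH XD piXD \<and>
        is_pushout C piXD (tar C pi (idt C H)) XHbH pi' pi'XD \<and>
        theta \<in> hom C XHbH XHH \<and> iso C theta \<and>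
        cmp C theta pi'XD = piXH \<and>
        cmp C rhoH rho = cmp C theta (cmp C pi' (cmp C XD rho)))"

definition pcom_mor :: "('o,'a) mcat \<Rightarrow> 'o \<Rightarrow> 'o \<Rightarrow> 'o \<Rightarrow> 'a \<Rightarrow> 'a \<Rightarrow>
    'o \<Rightarrow> 'o \<Rightarrow> 'a \<Rightarrow> 'a \<Rightarrow> 'a \<Rightarrow> 'a \<Rightarrow> bool" where
  "pcom_mor C H X XH pi rho X' XH' pi' rho' f fH \<longleftrightarrow>
     f \<in> hom C X X' \<and> fH \<in> hom C XH XH' \<and>
     cmp C rho' f = cmp C fH rho \<and>
     cmp C pi' (tar C f (idt C H)) = cmp C fH pi"

definition cov_obj :: "('o,'a) mcat \<Rightarrow> 'o \<Rightarrow> 'a \<Rightarrow> 'a \<Rightarrow> 'o \<Rightarrow> 'a \<Rightarrow> 'o \<Rightarrow> 'a \<Rightarrow> bool" where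
  "cov_obj C H D e Y dl X p \<longleftrightarrow> comodule C H D e Y dl \<and> X \<in> Obj C \<and>
     p \<in> hom C Y X \<and> epi C p"

definition cov_mor :: "('o,'a) mcat \<Rightarrow> 'o \<Rightarrow> 'o \<Rightarrow> 'a \<Rightarrow> 'o \<Rightarrow> 'a \<Rightarrow>
    'o \<Rightarrow> 'a \<Rightarrow> 'o \<Rightarrow> 'a \<Rightarrow> 'a \<Rightarrow> 'a \<Rightarrow> bool" where
  "cov_mor C H Y dl X p Y' dl' X' p' F f \<longleftrightarrow>
     comodule_mor C H Y dl Y' dl' F \<and> f \<in> hom C X X' \<and> cmp C p' F = cmp C f p"

definition induced :: "('o,'a) mcat \<Rightarrow> 'o \<Rightarrow> 'a \<Rightarrow> 'a \<Rightarrow> 'o \<Rightarrow> 'a \<Rightarrow> 'a \<Rightarrow> bool" where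
  "induced C H dl p XH rho pi \<longleftrightarrow>
     is_pushout C p (cmp C (tar C p (idt C H)) dl) XH rho pi"

definition ind_mor :: "('o,'a) mcat \<Rightarrow> 'o \<Rightarrow> 'o \<Rightarrow> 'o \<Rightarrow> 'a \<Rightarrow> 'a \<Rightarrow>
    'o \<Rightarrow> 'o \<Rightarrow> 'a \<Rightarrow> 'a \<Rightarrow> 'a \<Rightarrow> 'a" where
  "ind_mor C H X XH pi rho X' XH' pi' rho' f =
     (THE fH. pcom_mor C H X XH pi rho X' XH' pi' rho' f fH)"

end

(*
  The induced X\<bullet>H is the pushout of p and (p \<otimes> H) \<circ> \<delta>.  Pasting this square with the
  pushout squares defining (X\<bullet>H)\<bullet>H, resp. X\<bullet>(H\<otimes>H) and then X\<bullet>(H\<bullet>H), exhibits both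
  (X\<bullet>H)\<bullet>H and X\<bullet>(H\<bullet>H) as pushouts of p and (\<rho> \<otimes> H) \<circ> (p \<otimes> H) \<circ> \<delta>; for
  X\<bullet>(H\<bullet>H) this uses coassociativity of \<delta> to rewrite (\<pi> \<otimes> H) \<circ> (X \<otimes> \<Delta>) on the image
  of Y.  Hence the two are canonically isomorphic, which is (GP2); the counit of \<delta>
  gives X\<bullet>\<epsilon>, which is (GP1).  A morphism of covers yields a cocone on the span
  defining X\<bullet>H, hence f\<bullet>H; since \<pi> is a pushout of the epimorphism p it is epi, so
  f\<bullet>H is unique and functoriality follows.
*)
theory Submission
  imports Defs
begin

lemma hom_iff: "f \<in> hom C a b \<longleftrightarrow> f \<in> Arr C \<and> cdom C f = a \<and> ccod C f = b"
  unfolding hom_def by blast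

lemma pushout_arrs:
  assumes "is_pushout C f g P i j"
  shows "f \<in> Arr C" "g \<in> Arr C" "cdom C f = cdom C g"
    "i \<in> Arr C" "cdom C i = ccod C f" "ccod C i = P"
    "j \<in> Arr C" "cdom C j = ccod C g" "ccod C j = P"
  using assms unfolding is_pushout_def hom_iff by auto

lemma pushout_commutes: "is_pushout C f g P i j \<Longrightarrow> cmp C i f = cmp C j g"
  unfolding is_pushout_def by blast

lemma pushout_factor:
  assumes "is_pushout C f g P i j" "u \<in> hom C (ccod C f) Q" "v \<in> hom C (ccod C g) Q"
    "cmp C u f = cmp C v g"
  obtains w where "w \<in> hom C P Q" "cmp C w i = u" "cmp C w j = v"
  using assms unfolding is_pushout_def by metis

lemma has_pushoutsE:
  assumes "has_pushouts C" "f \<in> Arr C" "g \<in> Arr C" "cdom C f = cdom C g"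
  obtains P i j where "is_pushout C f g P i j"
  using assms unfolding has_pushouts_def by blast

locale strict_monoidal_cat =
  fixes C :: "('o,'a) mcat"
  assumes strict_monoidal: "strict_monoidal C"
begin

lemma category: "category C"
  using strict_monoidal unfolding strict_monoidal_def by blast

lemma dom_cod_obj [simp]:
  "f \<in> Arr C \<Longrightarrow> cdom C f \<in> Obj C" "f \<in> Arr C \<Longrightarrow> ccod C f \<in> Obj C"
  using category unfolding category_def by blast+

lemma idt_simps [simp]:
  assumes "a \<in> Obj C"
  shows "idt C a \<in> Arr C" "cdom C (idt C a) = a" "ccod C (idt C a) = a"
  using category assms unfolding category_def hom_iff by blast+

lemma cmp_simps [simp]:
  assumes "f \<in> Arr C" "g \<in> Arr C" "ccod C f = cdom C g"
  shows "cmp C g f \<in> Arr C" "cdom C (cmp C g f) = cdom C f" "ccod C (cmp C g f) = ccod C g"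
  using category assms unfolding category_def hom_iff by blast+

lemma cmp_idt_right [simp]: "f \<in> Arr C \<Longrightarrow> cdom C f = a \<Longrightarrow> cmp C f (idt C a) = f"
  and cmp_idt_left [simp]: "f \<in> Arr C \<Longrightarrow> ccod C f = a \<Longrightarrow> cmp C (idt C a) f = f"
  using category unfolding category_def by blast+

lemma cmp_assoc [simp]:
  assumes "f \<in> Arr C" "g \<in> Arr C" "h \<in> Arr C" "ccod C f = cdom C g" "ccod C g = cdom C h"
  shows "cmp C (cmp C h g) f = cmp C h (cmp C g f)"
  using category assms unfolding category_def by metis

lemma cmp_assoc_eq:
  assumes "cmp C g f = h" "f \<in> Arr C" "g \<in> Arr C" "ccod C f = cdom C g"
    "x \<in> Arr C" "ccod C x = cdom C f"
  shows "cmp C g (cmp C f x) = cmp C h x"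
  using assms by (simp flip: assms(1))

lemma unt_obj [simp]: "unt C \<in> Obj C"
  and tob_obj [simp]: "a \<in> Obj C \<Longrightarrow> b \<in> Obj C \<Longrightarrow> tob C a b \<in> Obj C"
  using strict_monoidal unfolding strict_monoidal_def by blast+

lemma tar_simps [simp]:
  assumes "f \<in> Arr C" "g \<in> Arr C"
  shows "tar C f g \<in> Arr C" "cdom C (tar C f g) = tob C (cdom C f) (cdom C g)"
    "ccod C (tar C f g) = tob C (ccod C f) (ccod C g)"
  using strict_monoidal assms unfolding strict_monoidal_def hom_iff by blast+

lemma tar_idt [simp]:
  "a \<in> Obj C \<Longrightarrow> b \<in> Obj C \<Longrightarrow> tar C (idt C a) (idt C b) = idt C (tob C a b)"
  using strict_monoidal unfolding strict_monoidal_def by blast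

lemma tar_cmp:
  assumes "f \<in> Arr C" "g \<in> Arr C" "f' \<in> Arr C" "g' \<in> Arr C"
    "ccod C f = cdom C g" "ccod C f' = cdom C g'"
  shows "tar C (cmp C g f) (cmp C g' f') = cmp C (tar C g g') (tar C f f')"
  using strict_monoidal assms unfolding strict_monoidal_def by blast

lemma tob_assoc [simp]:
  "a \<in> Obj C \<Longrightarrow> b \<in> Obj C \<Longrightarrow> c \<in> Obj C \<Longrightarrow> tob C (tob C a b) c = tob C a (tob C b c)"
  and tar_assoc [simp]:
  "f \<in> Arr C \<Longrightarrow> g \<in> Arr C \<Longrightarrow> h \<in> Arr C \<Longrightarrow> tar C (tar C f g) h = tar C f (tar C g h)"
  and tob_unt [simp]: "a \<in> Obj C \<Longrightarrow> tob C (unt C) a = a" "a \<in> Obj C \<Longrightarrow> tob C a (unt C) = a"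
  and tar_unt [simp]:
  "f \<in> Arr C \<Longrightarrow> tar C (idt C (unt C)) f = f" "f \<in> Arr C \<Longrightarrow> tar C f (idt C (unt C)) = f"
  using strict_monoidal unfolding strict_monoidal_def by blast+

lemma tar_cmp_idt:
  assumes "f \<in> Arr C" "g \<in> Arr C" "ccod C f = cdom C g" "a \<in> Obj C"
  shows "tar C (cmp C g f) (idt C a) = cmp C (tar C g (idt C a)) (tar C f (idt C a))"
  using tar_cmp[of f g "idt C a" "idt C a"] assms by simp

lemma tar_slide:
  assumes "f \<in> Arr C" "g \<in> Arr C"
  shows "cmp C (tar C (idt C (ccod C f)) g) (tar C f (idt C (cdom C g)))
       = cmp C (tar C f (idt C (ccod C g))) (tar C (idt C (cdom C f)) g)"
  using tar_cmp[of f "idt C (ccod C f)" "idt C (cdom C g)" g]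
    tar_cmp[of "idt C (cdom C f)" f g "idt C (ccod C g)"] assms
  by simp

lemma pushout_maps_eq:
  assumes po: "is_pushout C f g P i j" and w: "w \<in> hom C P Q" "w' \<in> hom C P Q"
    and eq: "cmp C w i = cmp C w' i" "cmp C w j = cmp C w' j"
  shows "w = w'"
proof -
  note sq = pushout_arrs[OF po]
  have "cmp C w i \<in> hom C (ccod C f) Q" "cmp C w j \<in> hom C (ccod C g) Q"
    using sq w by (simp_all add: hom_iff)
  moreover have "cmp C (cmp C w i) f = cmp C (cmp C w j) g"
    using sq w pushout_commutes[OF po] by (simp add: hom_iff)
  ultimately have "\<exists>!v. v \<in> hom C P Q \<and> cmp C v i = cmp C w i \<and> cmp C v j = cmp C w j"
    using po unfolding is_pushout_def by blast
  then show ?thesis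
    using w eq by metis
qed

lemma pushout_epi:
  assumes po: "is_pushout C f g P i j" and "epi C f"
  shows "epi C j"
  unfolding epi_def
proof (intro conjI ballI impI)
  note sq = pushout_arrs[OF po]
  show "j \<in> Arr C" by (fact sq)
  fix a b
  assume ab: "a \<in> Arr C" "b \<in> Arr C" "cdom C a = ccod C j" "cdom C b = ccod C j"
    "ccod C a = ccod C b" and eq: "cmp C a j = cmp C b j"
  have "cmp C (cmp C a i) f = cmp C (cmp C b i) f"
    using cmp_assoc_eq[OF eq, of g] ab sq pushout_commutes[OF po] by simp
  then have "cmp C a i = cmp C b i"
    using \<open>epi C f\<close> ab sq unfolding epi_def by simp
  then show "a = b"
    using pushout_maps_eq[OF po, of a "ccod C a" b] ab eq sq by (simp add: hom_iff)
qed

lemma pushout_paste: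
  assumes po1: "is_pushout C f g P i j" and po2: "is_pushout C j h Q k l"
  shows "is_pushout C f (cmp C h g) Q (cmp C k i) l"
proof -
  note sq1 = pushout_arrs[OF po1] and sq2 = pushout_arrs[OF po2]
  have outer: "cmp C (cmp C k i) f = cmp C l (cmp C h g)"
    using cmp_assoc_eq[OF pushout_commutes[OF po2, symmetric], of g] sq1 sq2 pushout_commutes[OF po1]
    by simp
  have "\<exists>!w. w \<in> hom C Q Z \<and> cmp C w (cmp C k i) = u \<and> cmp C w l = v"
    if u: "u \<in> hom C (ccod C f) Z" and v: "v \<in> hom C (ccod C h) Z"
      and uv: "cmp C u f = cmp C v (cmp C h g)" for Z u v
  proof -
    obtain w1 where w1: "w1 \<in> hom C P Z" "cmp C w1 i = u" "cmp C w1 j = cmp C v h"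
      by (rule pushout_factor[OF po1 u, of "cmp C v h"]) (use v uv sq1 sq2 in \<open>simp_all add: hom_iff\<close>)
    obtain w where w: "w \<in> hom C Q Z" "cmp C w k = w1" "cmp C w l = v"
      by (rule pushout_factor[OF po2 _ v]) (use w1 sq1 sq2 in \<open>simp_all add: hom_iff\<close>)
    show ?thesis
    proof (rule ex1I)
      show "w \<in> hom C Q Z \<and> cmp C w (cmp C k i) = u \<and> cmp C w l = v"
        using w w1 sq1 sq2 by (simp add: hom_iff flip: w(2))
      fix w' assume w': "w' \<in> hom C Q Z \<and> cmp C w' (cmp C k i) = u \<and> cmp C w' l = v"
      have "cmp C w' k = w1"
      proof (rule pushout_maps_eq[OF po1])
        have "cmp C (cmp C w' k) j = cmp C w' (cmp C l h)"
          using w' sq2 pushout_commutes[OF po2] by (simp add: hom_iff)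
        also have "\<dots> = cmp C w1 j"
          using w' w1(3) sq2 cmp_assoc_eq[of w' l v h] by (simp add: hom_iff)
        finally show "cmp C (cmp C w' k) j = cmp C w1 j" .
      qed (use w' w1 sq1 sq2 in \<open>simp_all add: hom_iff\<close>)
      then show "w' = w"
        using pushout_maps_eq[OF po2, of w' Z w] w w' by simp
    qed
  qed
  then show ?thesis
    using outer sq1 sq2 unfolding is_pushout_def hom_iff by simp
qed

lemma pushout_iso:
  assumes po: "is_pushout C f g P i j" and po': "is_pushout C f g P' i' j'"
  obtains \<theta> where "\<theta> \<in> hom C P' P" "iso C \<theta>" "cmp C \<theta> i' = i" "cmp C \<theta> j' = j"
proof -
  note sq = pushout_arrs[OF po] and sq' = pushout_arrs[OF po']
  have "P \<in> Obj C" "P' \<in> Obj C"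
    using dom_cod_obj(2)[OF sq(4)] dom_cod_obj(2)[OF sq'(4)] sq(6) sq'(6) by simp_all
  obtain \<theta> where \<theta>: "\<theta> \<in> hom C P' P" "cmp C \<theta> i' = i" "cmp C \<theta> j' = j"
    by (rule pushout_factor[OF po' _ _ pushout_commutes[OF po]]) (use sq sq' in \<open>simp_all add: hom_iff\<close>)
  obtain \<psi> where \<psi>: "\<psi> \<in> hom C P P'" "cmp C \<psi> i = i'" "cmp C \<psi> j = j'"
    by (rule pushout_factor[OF po _ _ pushout_commutes[OF po']]) (use sq sq' in \<open>simp_all add: hom_iff\<close>)
  have "cmp C \<theta> \<psi> = idt C P"
    by (rule pushout_maps_eq[OF po]) (use \<open>P \<in> Obj C\<close> \<theta> \<psi> sq in \<open>simp_all add: hom_iff\<close>)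
  moreover have "cmp C \<psi> \<theta> = idt C P'"
    by (rule pushout_maps_eq[OF po']) (use \<open>P' \<in> Obj C\<close> \<theta> \<psi> sq' in \<open>simp_all add: hom_iff\<close>)
  ultimately have "iso C \<theta>"
    using \<theta>(1) \<psi>(1) unfolding iso_def by (auto simp: hom_iff)
  with \<theta> show thesis using that by blast
qed

lemma pcom_mor_arrs:
  assumes "pcom_mor C H X XH pi rho X' XH' pi' rho' f fH"
  shows "f \<in> Arr C" "cdom C f = X" "ccod C f = X'" "fH \<in> Arr C" "cdom C fH = XH" "ccod C fH = XH'"
  using assms unfolding pcom_mor_def hom_iff by blast+

lemma pcom_datum_arrs:
  assumes "pcom_datum C H X XH pi rho"
  shows "rho \<in> Arr C" "cdom C rho = X" "ccod C rho = XH"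
    "pi \<in> Arr C" "cdom C pi = tob C X H" "ccod C pi = XH"
  using assms unfolding pcom_datum_def hom_iff by blast+

lemma pcom_mor_idt:
  assumes "pcom_datum C H X XH pi rho" "H \<in> Obj C"
  shows "pcom_mor C H X XH pi rho X XH pi rho (idt C X) (idt C XH)"
  using assms unfolding pcom_datum_def pcom_mor_def hom_iff by simp

lemma pcom_mor_cmp:
  assumes H: "H \<in> Obj C"
    and data: "pcom_datum C H X XH pi rho" "pcom_datum C H X' XH' pi' rho'"
      "pcom_datum C H X'' XH'' pi'' rho''"
    and f: "pcom_mor C H X XH pi rho X' XH' pi' rho' f fH"
    and g: "pcom_mor C H X' XH' pi' rho' X'' XH'' pi'' rho'' g gH"
  shows "pcom_mor C H X XH pi rho X'' XH'' pi'' rho'' (cmp C g f) (cmp C gH fH)"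
proof -
  note arrs = pcom_mor_arrs[OF f] pcom_mor_arrs[OF g]
    pcom_datum_arrs[OF data(1)] pcom_datum_arrs[OF data(2)] pcom_datum_arrs[OF data(3)]
  have rho: "cmp C rho' f = cmp C fH rho" "cmp C rho'' g = cmp C gH rho'"
    and pi: "cmp C pi' (tar C f (idt C H)) = cmp C fH pi"
      "cmp C pi'' (tar C g (idt C H)) = cmp C gH pi'"
    using f g unfolding pcom_mor_def by blast+
  have "cmp C rho'' (cmp C g f) = cmp C (cmp C gH fH) rho"
    using cmp_assoc_eq[OF rho(2), of f] rho(1) arrs by simp
  moreover have "cmp C pi'' (tar C (cmp C g f) (idt C H)) = cmp C (cmp C gH fH) pi"
    using tar_cmp_idt[of f g H] cmp_assoc_eq[OF pi(2), of "tar C f (idt C H)"] pi(1) arrs H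
    by simp
  ultimately show ?thesis
    using arrs unfolding pcom_mor_def hom_iff by simp
qed

lemma pcom_mor_unique:
  assumes "pcom_datum C H X XH pi rho"
    and "pcom_mor C H X XH pi rho X' XH' pi' rho' f fH"
    and "pcom_mor C H X XH pi rho X' XH' pi' rho' f fH'"
  shows "fH = fH'"
  using assms unfolding pcom_datum_def pcom_mor_def epi_def hom_iff by metis

lemma ind_mor_eqI:
  assumes "pcom_datum C H X XH pi rho" "pcom_mor C H X XH pi rho X' XH' pi' rho' f fH"
  shows "ind_mor C H X XH pi rho X' XH' pi' rho' f = fH"
  unfolding ind_mor_def using assms pcom_mor_unique by blast

lemma ind_mor_idt:
  assumes "pcom_datum C H X XH pi rho" "H \<in> Obj C"
  shows "ind_mor C H X XH pi rho X XH pi rho (idt C X) = idt C XH"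
  using ind_mor_eqI pcom_mor_idt assms by blast

lemma ind_mor_cmp:
  assumes H: "H \<in> Obj C"
    and datum: "pcom_datum C H X XH pi rho" "pcom_datum C H X' XH' pi' rho'"
      "pcom_datum C H X'' XH'' pi'' rho''"
    and f: "pcom_mor C H X XH pi rho X' XH' pi' rho' f fH"
    and g: "pcom_mor C H X' XH' pi' rho' X'' XH'' pi'' rho'' g gH"
  shows "ind_mor C H X XH pi rho X'' XH'' pi'' rho'' (cmp C g f)
       = cmp C (ind_mor C H X' XH' pi' rho' X'' XH'' pi'' rho'' g)
               (ind_mor C H X XH pi rho X' XH' pi' rho' f)"
  using ind_mor_eqI[OF datum(1) pcom_mor_cmp[OF H datum f g]] ind_mor_eqI[OF datum(1) f]
    ind_mor_eqI[OF datum(2) g]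
  by simp

end

locale coalgebra_in = strict_monoidal_cat +
  fixes H :: 'o and D e :: 'a
  assumes coalgebra: "coalgebra C H D e"
begin

lemma coalgebra_arrs [simp]:
  "H \<in> Obj C" "D \<in> Arr C" "cdom C D = H" "ccod C D = tob C H H"
  "e \<in> Arr C" "cdom C e = H" "ccod C e = unt C"
  using coalgebra unfolding coalgebra_def hom_iff by blast+

lemma comodule_arrs:
  assumes "comodule C H D e Y dl"
  shows "Y \<in> Obj C" "dl \<in> Arr C" "cdom C dl = Y" "ccod C dl = tob C Y H"
  using assms unfolding comodule_def hom_iff by blast+

lemma comodule_push_counit:
  assumes Y: "comodule C H D e Y dl" and p: "p \<in> Arr C" "cdom C p = Y"
  shows "cmp C (tar C (idt C (ccod C p)) e) (cmp C (tar C p (idt C H)) dl) = p"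
proof -
  note arrs = comodule_arrs[OF Y] p
  have "cmp C (tar C (idt C (ccod C p)) e) (tar C p (idt C H)) = cmp C p (tar C (idt C Y) e)"
    using tar_slide[of p e] arrs by simp
  from cmp_assoc_eq[OF this, of dl]
  have "cmp C (tar C (idt C (ccod C p)) e) (cmp C (tar C p (idt C H)) dl)
      = cmp C p (cmp C (tar C (idt C Y) e) dl)"
    using arrs by simp
  also have "\<dots> = p"
    using Y arrs unfolding comodule_def by simp
  finally show ?thesis .
qed

lemma comodule_push_coassoc:
  assumes Y: "comodule C H D e Y dl" and p: "p \<in> Arr C" "cdom C p = Y"
  shows "cmp C (tar C (idt C (ccod C p)) D) (cmp C (tar C p (idt C H)) dl)
       = cmp C (tar C (cmp C (tar C p (idt C H)) dl) (idt C H)) dl"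
proof -
  note arrs = comodule_arrs[OF Y] p
  have "cmp C (tar C (idt C (ccod C p)) D) (tar C p (idt C H))
      = cmp C (tar C p (idt C (tob C H H))) (tar C (idt C Y) D)"
    using tar_slide[of p D] arrs by simp
  from cmp_assoc_eq[OF this, of dl]
  have "cmp C (tar C (idt C (ccod C p)) D) (cmp C (tar C p (idt C H)) dl)
      = cmp C (tar C p (idt C (tob C H H))) (cmp C (tar C (idt C Y) D) dl)"
    using arrs by simp
  also have "\<dots> = cmp C (tar C p (idt C (tob C H H))) (cmp C (tar C dl (idt C H)) dl)"
    using Y unfolding comodule_def by simp
  also have "\<dots> = cmp C (tar C (cmp C (tar C p (idt C H)) dl) (idt C H)) dl"
    using tar_cmp_idt[of dl "tar C p (idt C H)" H] arrs by simp
  finally show ?thesis .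
qed

end

locale induced_cover = coalgebra_in +
  fixes Y dl X p XH rho pi
  assumes cover: "cov_obj C H D e Y dl X p"
    and induced: "induced C H dl p XH rho pi"
begin

lemma cover_arrs [simp]:
  "Y \<in> Obj C" "dl \<in> Arr C" "cdom C dl = Y" "ccod C dl = tob C Y H"
  "X \<in> Obj C" "p \<in> Arr C" "cdom C p = Y" "ccod C p = X"
  using cover comodule_arrs unfolding cov_obj_def hom_iff by blast+

lemma induced_pushout: "is_pushout C p (cmp C (tar C p (idt C H)) dl) XH rho pi"
  using induced unfolding induced_def .

lemma induced_arrs [simp]:
  "rho \<in> Arr C" "cdom C rho = X" "ccod C rho = XH"
  "pi \<in> Arr C" "cdom C pi = tob C X H" "ccod C pi = XH" "XH \<in> Obj C"
  using pushout_arrs[OF induced_pushout] dom_cod_obj(2)[of rho] by simp_all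

lemma induced_commutes: "cmp C rho p = cmp C pi (cmp C (tar C p (idt C H)) dl)"
  using pushout_commutes[OF induced_pushout] .

lemma induced_pcom_datum: "pcom_datum C H X XH pi rho"
  using pushout_epi[OF induced_pushout] cover
  unfolding pcom_datum_def cov_obj_def hom_iff by simp

lemma induced_GP1:
  "\<exists>Xe \<in> hom C XH X. cmp C Xe rho = idt C X \<and> cmp C Xe pi = tar C (idt C X) e"
proof -
  have "cmp C (idt C X) p = cmp C (tar C (idt C X) e) (cmp C (tar C p (idt C H)) dl)"
    using comodule_push_counit[of Y dl p] cover unfolding cov_obj_def by simp
  then obtain Xe where "Xe \<in> hom C XH X" "cmp C Xe rho = idt C X" "cmp C Xe pi = tar C (idt C X) e"
    by (rule pushout_factor[OF induced_pushout, rotated 2]) (simp_all add: hom_iff)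
  then show ?thesis by blast
qed

lemma induced_coassoc:
  "cmp C (tar C pi (idt C H)) (cmp C (tar C (idt C X) D) (cmp C (tar C p (idt C H)) dl))
 = cmp C (tar C rho (idt C H)) (cmp C (tar C p (idt C H)) dl)"
proof -
  have "cmp C (tar C pi (idt C H)) (cmp C (tar C (idt C X) D) (cmp C (tar C p (idt C H)) dl))
      = cmp C (tar C pi (idt C H)) (cmp C (tar C (cmp C (tar C p (idt C H)) dl) (idt C H)) dl)"
    using comodule_push_coassoc[of Y dl p] cover unfolding cov_obj_def by simp
  also have "\<dots> = cmp C (tar C (cmp C rho p) (idt C H)) dl"
    using tar_cmp_idt[of "cmp C (tar C p (idt C H)) dl" pi H] induced_commutes by simp
  also have "\<dots> = cmp C (tar C rho (idt C H)) (cmp C (tar C p (idt C H)) dl)"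
    using tar_cmp_idt[of p rho H] by simp
  finally show ?thesis .
qed

lemma induced_GP2:
  assumes "has_pushouts C"
  shows "\<exists>XHH rhoH piXH XHxH XD piXD XHbH pi' pi'XD theta.
        is_pushout C pi (tar C rho (idt C H)) XHH rhoH piXH \<and>
        is_pushout C pi (tar C (idt C X) D) XHxH XD piXD \<and>
        is_pushout C piXD (tar C pi (idt C H)) XHbH pi' pi'XD \<and>
        theta \<in> hom C XHbH XHH \<and> iso C theta \<and>
        cmp C theta pi'XD = piXH \<and>
        cmp C rhoH rho = cmp C theta (cmp C pi' (cmp C XD rho))"
proof -
  obtain XHH rhoH piXH where po1: "is_pushout C pi (tar C rho (idt C H)) XHH rhoH piXH"
    by (rule has_pushoutsE[OF assms, of pi "tar C rho (idt C H)"]) auto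
  obtain XHxH XD piXD where po2: "is_pushout C pi (tar C (idt C X) D) XHxH XD piXD"
    by (rule has_pushoutsE[OF assms, of pi "tar C (idt C X) D"]) auto
  obtain XHbH pi' pi'XD where po3: "is_pushout C piXD (tar C pi (idt C H)) XHbH pi' pi'XD"
    by (rule has_pushoutsE[OF assms, of piXD "tar C pi (idt C H)"]) (use pushout_arrs[OF po2] in auto)
  have "is_pushout C p (cmp C (tar C rho (idt C H)) (cmp C (tar C p (idt C H)) dl))
      XHH (cmp C rhoH rho) piXH"
    by (rule pushout_paste[OF induced_pushout po1])
  moreover have "is_pushout C p (cmp C (tar C rho (idt C H)) (cmp C (tar C p (idt C H)) dl))
      XHbH (cmp C pi' (cmp C XD rho)) pi'XD"
    using pushout_paste[OF pushout_paste[OF induced_pushout po2] po3] induced_coassoc by simp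
  ultimately obtain theta where "theta \<in> hom C XHbH XHH" "iso C theta"
    "cmp C theta (cmp C pi' (cmp C XD rho)) = cmp C rhoH rho" "cmp C theta pi'XD = piXH"
    by (rule pushout_iso)
  with po1 po2 po3 show ?thesis by metis
qed

lemma induced_geom_pcom: "has_pushouts C \<Longrightarrow> geom_pcom C H D e X XH pi rho"
  unfolding geom_pcom_def using induced_pcom_datum induced_GP1 induced_GP2 by blast

end

context coalgebra_in
begin

lemma induced_coverI:
  "cov_obj C H D e Y dl X p \<Longrightarrow> induced C H dl p XH rho pi
    \<Longrightarrow> induced_cover C H D e Y dl X p XH rho pi"
  by (intro induced_cover.intro induced_cover_axioms.intro coalgebra_in_axioms)

lemma induced_pcom_mor_exists:
  assumes cov: "cov_obj C H D e Y dl X p" "induced C H dl p XH rho pi"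
    and cov': "cov_obj C H D e Y' dl' X' p'" "induced C H dl' p' XH' rho' pi'"
    and Ff: "cov_mor C H Y dl X p Y' dl' X' p' F f"
  obtains fH where "pcom_mor C H X XH pi rho X' XH' pi' rho' f fH"
proof -
  interpret A: induced_cover C H D e Y dl X p XH rho pi by (rule induced_coverI[OF cov])
  interpret B: induced_cover C H D e Y' dl' X' p' XH' rho' pi' by (rule induced_coverI[OF cov'])
  have arrs: "F \<in> Arr C" "cdom C F = Y" "ccod C F = Y'" "f \<in> Arr C" "cdom C f = X" "ccod C f = X'"
    and F: "cmp C dl' F = cmp C (tar C F (idt C H)) dl"
    and f: "cmp C p' F = cmp C f p"
    using Ff unfolding cov_mor_def comodule_mor_def hom_iff by blast+
  have "cmp C (cmp C rho' f) p = cmp C rho' (cmp C p' F)"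
    using f arrs by simp
  also have "\<dots> = cmp C pi' (cmp C (tar C p' (idt C H)) (cmp C dl' F))"
    using cmp_assoc_eq[OF B.induced_commutes, of F] arrs by simp
  also have "\<dots> = cmp C pi' (cmp C (tar C (cmp C p' F) (idt C H)) dl)"
    using F tar_cmp_idt[of F p' H] arrs by simp
  also have "\<dots> = cmp C (cmp C pi' (tar C f (idt C H))) (cmp C (tar C p (idt C H)) dl)"
    using f tar_cmp_idt[of p f H] arrs by simp
  finally obtain fH where "fH \<in> hom C XH XH'" "cmp C fH rho = cmp C rho' f"
    "cmp C fH pi = cmp C pi' (tar C f (idt C H))"
    by (rule pushout_factor[OF A.induced_pushout, rotated 2]) (use arrs in \<open>simp_all add: hom_iff\<close>)
  with arrs have "pcom_mor C H X XH pi rho X' XH' pi' rho' f fH"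
    unfolding pcom_mor_def hom_iff by simp
  then show thesis by (rule that)
qed

lemma induced_pcom_mor_ind_mor:
  assumes "cov_obj C H D e Y dl X p" "induced C H dl p XH rho pi"
    and "cov_obj C H D e Y' dl' X' p'" "induced C H dl' p' XH' rho' pi'"
    and "cov_mor C H Y dl X p Y' dl' X' p' F f"
  shows "pcom_mor C H X XH pi rho X' XH' pi' rho' f (ind_mor C H X XH pi rho X' XH' pi' rho' f)"
proof -
  obtain fH where "pcom_mor C H X XH pi rho X' XH' pi' rho' f fH"
    by (rule induced_pcom_mor_exists[OF assms])
  moreover note induced_cover.induced_pcom_datum[OF induced_coverI[OF assms(1,2)]]
  ultimately show ?thesis
    using ind_mor_eqI by simp
qed

lemma induced_mor_ex1:
  assumes "cov_obj C H D e Y dl X p" "induced C H dl p XH rho pi"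
    and "cov_obj C H D e Y' dl' X' p'" "induced C H dl' p' XH' rho' pi'"
    and "cov_mor C H Y dl X p Y' dl' X' p' F f"
  shows "\<exists>!fH. fH \<in> hom C XH XH' \<and> cmp C fH rho = cmp C rho' f \<and>
               cmp C fH pi = cmp C pi' (tar C f (idt C H))"
proof -
  have "f \<in> hom C X X'"
    using assms(5) unfolding cov_mor_def by blast
  then have "pcom_mor C H X XH pi rho X' XH' pi' rho' f fH \<longleftrightarrow>
      fH \<in> hom C XH XH' \<and> cmp C fH rho = cmp C rho' f \<and> cmp C fH pi = cmp C pi' (tar C f (idt C H))"
    for fH
    unfolding pcom_mor_def by auto
  then show ?thesis
    using induced_pcom_mor_ind_mor[OF assms] pcom_mor_unique
      induced_cover.induced_pcom_datum[OF induced_coverI[OF assms(1,2)]]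
    by metis
qed

lemma induced_ind_mor_idt:
  assumes "cov_obj C H D e Y dl X p" "induced C H dl p XH rho pi"
  shows "ind_mor C H X XH pi rho X XH pi rho (idt C X) = idt C XH"
  using ind_mor_idt induced_cover.induced_pcom_datum[OF induced_coverI[OF assms]] by simp

lemma induced_ind_mor_cmp:
  assumes "cov_obj C H D e Y dl X p" "induced C H dl p XH rho pi"
    and "cov_obj C H D e Y' dl' X' p'" "induced C H dl' p' XH' rho' pi'"
    and "cov_obj C H D e Y'' dl'' X'' p''" "induced C H dl'' p'' XH'' rho'' pi''"
    and "cov_mor C H Y dl X p Y' dl' X' p' F f"
    and "cov_mor C H Y' dl' X' p' Y'' dl'' X'' p'' G g"
  shows "ind_mor C H X XH pi rho X'' XH'' pi'' rho'' (cmp C g f) =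
          cmp C (ind_mor C H X' XH' pi' rho' X'' XH'' pi'' rho'' g)
                (ind_mor C H X XH pi rho X' XH' pi' rho' f)"
  using ind_mor_cmp[OF coalgebra_arrs(1)
      induced_cover.induced_pcom_datum[OF induced_coverI[OF assms(1,2)]]
      induced_cover.induced_pcom_datum[OF induced_coverI[OF assms(3,4)]]
      induced_cover.induced_pcom_datum[OF induced_coverI[OF assms(5,6)]]
      induced_pcom_mor_ind_mor[OF assms(1-4,7)] induced_pcom_mor_ind_mor[OF assms(3-6,8)]] .

end

theorem proposition2p8:
  fixes C :: "('o,'a) mcat" and H :: 'o and D e :: 'a
  assumes "strict_monoidal C" and "has_pushouts C" and "coalgebra C H D e"
  shows
    \<comment> \<open>objects: Ind(Y,X,p) is a geometric partial comodule\<close>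
    "(\<forall>Y dl X p XH rho pi.
        cov_obj C H D e Y dl X p \<longrightarrow> induced C H dl p XH rho pi \<longrightarrow>
        geom_pcom C H D e X XH pi rho)
   \<and> \<comment> \<open>morphisms: unique f\<bullet>H, and (f, f\<bullet>H) is a morphism in PCom^H\<close>
    (\<forall>Y dl X p XH rho pi Y' dl' X' p' XH' rho' pi' F f.
        cov_obj C H D e Y dl X p \<longrightarrow> induced C H dl p XH rho pi \<longrightarrow>
        cov_obj C H D e Y' dl' X' p' \<longrightarrow> induced C H dl' p' XH' rho' pi' \<longrightarrow>
        cov_mor C H Y dl X p Y' dl' X' p' F f \<longrightarrow>
        (\<exists>!fH. fH \<in> hom C XH XH' \<and> cmp C fH rho = cmp C rho' f \<and>
               cmp C fH pi = cmp C pi' (tar C f (idt C H)))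
        \<and> pcom_mor C H X XH pi rho X' XH' pi' rho' f
            (ind_mor C H X XH pi rho X' XH' pi' rho' f))
   \<and> \<comment> \<open>functoriality: identities\<close>
    (\<forall>Y dl X p XH rho pi.
        cov_obj C H D e Y dl X p \<longrightarrow> induced C H dl p XH rho pi \<longrightarrow>
        ind_mor C H X XH pi rho X XH pi rho (idt C X) = idt C XH)
   \<and> \<comment> \<open>functoriality: composition\<close>
    (\<forall>Y dl X p XH rho pi Y' dl' X' p' XH' rho' pi' Y'' dl'' X'' p'' XH'' rho'' pi''
        F f G g.
        cov_obj C H D e Y dl X p \<longrightarrow> induced C H dl p XH rho pi \<longrightarrow>
        cov_obj C H D e Y' dl' X' p' \<longrightarrow> induced C H dl' p' XH' rho' pi' \<longrightarrow>
        cov_obj C H D e Y'' dl'' X'' p'' \<longrightarrow> induced C H dl'' p'' XH'' rho'' pi'' \<longrightarrow>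
        cov_mor C H Y dl X p Y' dl' X' p' F f \<longrightarrow>
        cov_mor C H Y' dl' X' p' Y'' dl'' X'' p'' G g \<longrightarrow>
        ind_mor C H X XH pi rho X'' XH'' pi'' rho'' (cmp C g f) =
          cmp C (ind_mor C H X' XH' pi' rho' X'' XH'' pi'' rho'' g)
                (ind_mor C H X XH pi rho X' XH' pi' rho' f))"
proof -
  interpret coalgebra_in C H D e
    using assms(1,3) by (intro coalgebra_in.intro strict_monoidal_cat.intro coalgebra_in_axioms.intro)
  show ?thesis
    by (intro conjI allI impI)
      (assumption | rule induced_cover.induced_geom_pcom[OF induced_coverI assms(2)]
        induced_mor_ex1 induced_pcom_mor_ind_mor induced_ind_mor_idt induced_ind_mor_cmp)+
qed

end
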